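(* Let $d\ge 3$, $\lambda>0$, $\rho_0=o(1)$, $\mu=\rho_0/(d+\lambda)$, and let $a,b,c\ge0$ be a trajectory of \[ \dot a=-2\,\mathrm{sgn}(g_{w_\star})\sqrt a,\quad \dot b=-2\,\mathrm{sgn}(g_v)\sqrt b,\quad \dot c=-2\,\mathrm{sgn}(g_\perp)\sqrt c, \] with $a(0)=b(0)=c(0)=\mu$, where $r=a+(1+\lambda)b+(d-2)c$, $g_{w_\star}=4(r+2a-3)$, $g_v=4(1+\lambda)(r+2(1+\lambda)b-1)$, $g_\perp=4(r+2c-1)$, $\mathrm{sgn}(0)=0$. Fix $\rho\in(0,1/12)$ and let $T_2'=\inf\{t\ge0:a(t)\ge\rho\}$. Then for all $t\ge T_2'$, \[ a(t)\ge\rho,\quad b(t)\le\frac{1}{3(1+\lambda)},\quad (d-2)c(t)^2\le\frac1{d-2}, \] and consequently \[ 1-\mathrm{Align}(t)\le\frac{1}{2\rho^2}\Big(\frac{1}{9(1+\lambda)^2}+\frac{1}{d-2}\Big). \] In particular, if $d\to\infty$ and $\lambda=\lambda(d)\to\infty$, then $\sup_{t\ge T_2'}(1-\mathrm{Align}(t))\to0$.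
   Context: These ODEs describe the population spectral gradient flow $\dot W=-\mathrm{polar}(\nabla_W\mathcal L(W))$ for the phase-retrieval model $y=(x^\top w_\star)^2+\nu$, $x\sim\mathcal N(0,I_d+\lambda vv^\top)$ with $v\perp w_\star$ unit vectors, network $f_W(x)=\sum_{j=1}^d(w_j^\top x)^2$, in the coordinates $WW^\top=a\,w_\star w_\star^\top+b\,vv^\top+c(I-w_\star w_\star^\top-vv^\top)$; $\mathrm{polar}(A)=A(A^\top A)^{-1/2}$. The alignment is $\mathrm{Align}(t)=a(t)/\sqrt{a(t)^2+b(t)^2+(d-2)c(t)^2}$. $d$ is taken large. *)

theory Defs
  imports "HOL-Analysis.Analysis"
begin

text \<open>Set-valued sign (Filippov convexification): the value of sgn at a discontinuity
  point 0 is replaced by the interval [-1,1]; away from 0 it is the usual sign.\<close>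
definition sgn_set :: "real \<Rightarrow> real set" where
  "sgn_set x = (if x > 0 then {1} else if x < 0 then {-1} else {-1..1})"

definition r_fn :: "nat \<Rightarrow> real \<Rightarrow> real \<Rightarrow> real \<Rightarrow> real \<Rightarrow> real" where
  "r_fn d lam a b c = a + (1 + lam) * b + (real d - 2) * c"

definition g_star :: "nat \<Rightarrow> real \<Rightarrow> real \<Rightarrow> real \<Rightarrow> real \<Rightarrow> real" where
  "g_star d lam a b c = 4 * (r_fn d lam a b c + 2 * a - 3)"

definition g_v :: "nat \<Rightarrow> real \<Rightarrow> real \<Rightarrow> real \<Rightarrow> real \<Rightarrow> real" where
  "g_v d lam a b c = 4 * (1 + lam) * (r_fn d lam a b c + 2 * (1 + lam) * b - 1)"

definition g_perp :: "nat \<Rightarrow> real \<Rightarrow> real \<Rightarrow> real \<Rightarrow> real \<Rightarrow> real" where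
  "g_perp d lam a b c = 4 * (r_fn d lam a b c + 2 * c - 1)"

text \<open>(a,b,c) is a trajectory on [0,\<infinity>) of
  a' = -2 sgn(g_star) sqrt a, b' = -2 sgn(g_v) sqrt b, c' = -2 sgn(g_perp) sqrt c,
  started at a(0)=b(0)=c(0)=mu, in the integral (absolutely continuous) sense, with the
  sign at 0 understood in the Filippov sense.\<close>
definition is_traj ::
  "nat \<Rightarrow> real \<Rightarrow> real \<Rightarrow> (real \<Rightarrow> real) \<Rightarrow> (real \<Rightarrow> real) \<Rightarrow> (real \<Rightarrow> real) \<Rightarrow> bool" where
  "is_traj d lam mu a b c \<longleftrightarrow>
     a 0 = mu \<and> b 0 = mu \<and> c 0 = mu \<and>
     (\<forall>t\<ge>0. a t \<ge> 0 \<and> b t \<ge> 0 \<and> c t \<ge> 0) \<and>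
     (\<exists>\<alpha> \<beta> \<gamma> :: real \<Rightarrow> real.
        (\<forall>t\<ge>0. \<alpha> t \<in> (\<lambda>s. -2 * s * sqrt (a t)) ` sgn_set (g_star d lam (a t) (b t) (c t))) \<and>
        (\<forall>t\<ge>0. \<beta> t \<in> (\<lambda>s. -2 * s * sqrt (b t)) ` sgn_set (g_v d lam (a t) (b t) (c t))) \<and>
        (\<forall>t\<ge>0. \<gamma> t \<in> (\<lambda>s. -2 * s * sqrt (c t)) ` sgn_set (g_perp d lam (a t) (b t) (c t))) \<and>
        (\<forall>t\<ge>0. (\<alpha> has_integral (a t - mu)) {0..t}) \<and>
        (\<forall>t\<ge>0. (\<beta> has_integral (b t - mu)) {0..t}) \<and>
        (\<forall>t\<ge>0. (\<gamma> has_integral (c t - mu)) {0..t}))"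

definition align :: "nat \<Rightarrow> real \<Rightarrow> real \<Rightarrow> real \<Rightarrow> real" where
  "align d a b c = a / sqrt (a\<^sup>2 + b\<^sup>2 + (real d - 2) * c\<^sup>2)"

text \<open>T_2' = inf {t \<ge> 0 : a(t) \<ge> rho} (used only when this set is nonempty).\<close>
definition T2' :: "(real \<Rightarrow> real) \<Rightarrow> real \<Rightarrow> real" where
  "T2' a rho = Inf {t. 0 \<le> t \<and> rho \<le> a t}"

end

(*
  Each coordinate x of the trajectory obeys x' = -2 sgn(g) sqrt x, so it cannot increase while
  its gradient g is positive and cannot decrease while g is negative: a level that x can only
  cross against the sign of g is a barrier.  Since the initial value mu is at most 1/d and
  1/(3(1+lam)), and g_perp > 0 as soon as c > 1/d while g_v > 0 as soon as b > 1/(3(1+lam)),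
  both bounds hold for all time.  Given them, g_star < 0 whenever a < 5/9, so once a has reached
  rho it stays above rho.  The alignment estimate is then 1 - a / sqrt (a^2 + q) <= q / (2 a^2)
  with q = b^2 + (d-2) c^2, and its right-hand side vanishes as d and lam tend to infinity.
*)
theory Submission
  imports Defs
begin

definition sign_flow :: "(real \<Rightarrow> real) \<Rightarrow> (real \<Rightarrow> real) \<Rightarrow> bool" where
  "sign_flow f g \<longleftrightarrow>
     (\<exists>\<phi>. (\<forall>t\<ge>0. \<phi> t \<in> (\<lambda>s. -2 * s * sqrt (f t)) ` sgn_set (g t)) \<and>
          (\<forall>t\<ge>0. (\<phi> has_integral (f t - f 0)) {0..t}))"

lemma continuous_on_integral_curve:
  fixes f \<phi> :: "real \<Rightarrow> real"
  assumes int: "\<And>t. 0 \<le> t \<Longrightarrow> (\<phi> has_integral (f t - f 0)) {0..t}"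
  shows "continuous_on {0..} f"
proof -
  have bounded: "continuous_on {0..T} f" if "0 \<le> T" for T
  proof -
    have "continuous_on {0..T} (\<lambda>x. f 0 + integral {0..x} \<phi>)"
      using int[OF that] by (intro continuous_intros indefinite_integral_continuous_1) blast
    moreover have "f 0 + integral {0..x} \<phi> = f x" if "x \<in> {0..T}" for x
      using int[of x] that by (simp add: integral_unique)
    ultimately show ?thesis
      by (metis (no_types, lifting) continuous_on_cong)
  qed
  show ?thesis
    unfolding continuous_on_eq_continuous_within
  proof
    fix x :: real assume "x \<in> {0..}"
    then have "continuous (at x within {0..x+1}) f"
      using bounded[of "x + 1"] by (simp add: continuous_on_eq_continuous_within)
    moreover have "at x within {0..} = at x within {0..x+1}"
      by (rule at_within_nhd[where S="{..<x+1}"]) auto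
    ultimately show "continuous (at x within {0..}) f"
      by simp
  qed
qed

lemma has_integral_increment:
  fixes f \<phi> :: "real \<Rightarrow> real"
  assumes int: "\<And>t. 0 \<le> t \<Longrightarrow> (\<phi> has_integral (f t - f 0)) {0..t}"
    and "0 \<le> s" "s \<le> t"
  shows "(\<phi> has_integral (f t - f s)) {s..t}"
proof -
  have "\<phi> integrable_on {s..t}"
    using assms by (intro integrable_subinterval_real[OF has_integral_integrable[OF int[of t]]]) auto
  then obtain j where j: "(\<phi> has_integral j) {s..t}"
    by blast
  have "(\<phi> has_integral (f s - f 0) + j) {0..t}"
    using assms by (intro has_integral_combine[OF _ _ int j]) auto
  then have "f s - f 0 + j = f t - f 0"
    using int[of t] assms by (intro has_integral_unique) auto
  then have "j = f t - f s"
    by simp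
  with j show ?thesis
    by simp
qed

lemma integral_curve_stays_below:
  fixes f \<phi> :: "real \<Rightarrow> real"
  assumes int: "\<And>t. 0 \<le> t \<Longrightarrow> (\<phi> has_integral (f t - f 0)) {0..t}"
    and descent: "\<And>u. 0 \<le> u \<Longrightarrow> K < f u \<Longrightarrow> \<phi> u \<le> 0"
    and "0 \<le> t0" "f t0 \<le> K" "t0 \<le> t"
  shows "f t \<le> K"
proof -
  \<comment> \<open>After the last time \<open>s \<le> t\<close> with \<open>f s \<le> K\<close> the velocity is nonpositive.\<close>
  define S where "S = {t0..t} \<inter> f -` {..K}"
  have "continuous_on {t0..t} f"
    using continuous_on_subset[OF continuous_on_integral_curve[OF int]] assms(3) by simp
  then have "closed S"
    unfolding S_def by (rule continuous_closed_preimage) auto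
  moreover have "t0 \<in> S" "bdd_above S"
    using assms(4,5) unfolding S_def by auto
  ultimately have "Sup S \<in> S"
    using closed_contains_Sup by blast
  define s where "s = Sup S"
  have s: "t0 \<le> s" "s \<le> t" "f s \<le> K"
    using \<open>Sup S \<in> S\<close> unfolding s_def S_def by auto
  have above: "K < f u" if "s < u" "u \<le> t" for u
  proof (rule ccontr)
    assume "\<not> K < f u"
    then have "u \<in> S"
      using that s unfolding S_def by auto
    then show False
      using cSup_upper[OF _ \<open>bdd_above S\<close>] that unfolding s_def by fastforce
  qed
  have "(\<phi> has_integral (f t - f s)) {s..t}"
    using has_integral_increment[OF int] s assms(3) by simp
  moreover have "negligible {x \<in> {s..t} - {s<..t}. \<phi> x \<noteq> 0}"
    by (rule negligible_subset[OF negligible_sing[of s]]) auto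
  moreover have "negligible {x \<in> {s<..t} - {s..t}. \<phi> x \<noteq> 0}"
    by (rule empty_imp_negligible) auto
  ultimately have "(\<phi> has_integral (f t - f s)) {s<..t}"
    using has_integral_spike_set_eq by blast
  moreover have "\<phi> u \<le> 0" if "u \<in> {s<..t}" for u
    using that above descent s assms(3) by simp
  ultimately have "f t - f s \<le> 0"
    using has_integral_le[OF _ has_integral_0] by blast
  with s show ?thesis
    by simp
qed

lemma sign_velocity_nonpos:
  "0 \<le> x \<Longrightarrow> 0 < g \<Longrightarrow> v \<in> (\<lambda>s. -2 * s * sqrt x) ` sgn_set g \<Longrightarrow> v \<le> 0"
  by (auto simp: sgn_set_def)

lemma sign_velocity_nonneg:
  "0 \<le> x \<Longrightarrow> g < 0 \<Longrightarrow> v \<in> (\<lambda>s. -2 * s * sqrt x) ` sgn_set g \<Longrightarrow> 0 \<le> v"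
  by (auto simp: sgn_set_def)

lemma sign_flow_continuous_on:
  "sign_flow f g \<Longrightarrow> continuous_on {0..} f"
  unfolding sign_flow_def using continuous_on_integral_curve by blast

lemma sign_flow_stays_below:
  assumes "sign_flow f g"
    and nonneg: "\<And>u. 0 \<le> u \<Longrightarrow> 0 \<le> f u"
    and push: "\<And>u. 0 \<le> u \<Longrightarrow> K < f u \<Longrightarrow> 0 < g u"
    and "0 \<le> t0" "f t0 \<le> K" "t0 \<le> t"
  shows "f t \<le> K"
proof -
  obtain \<phi> where vel: "\<And>u. 0 \<le> u \<Longrightarrow> \<phi> u \<in> (\<lambda>s. -2 * s * sqrt (f u)) ` sgn_set (g u)"
    and int: "\<And>t. 0 \<le> t \<Longrightarrow> (\<phi> has_integral (f t - f 0)) {0..t}"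
    using assms(1) unfolding sign_flow_def by blast
  show ?thesis
    using sign_velocity_nonpos[OF nonneg push vel]
    by (intro integral_curve_stays_below[OF int _ assms(4-6)])
qed

lemma sign_flow_stays_above:
  assumes "sign_flow f g"
    and nonneg: "\<And>u. 0 \<le> u \<Longrightarrow> 0 \<le> f u"
    and pull: "\<And>u. 0 \<le> u \<Longrightarrow> f u < K \<Longrightarrow> g u < 0"
    and "0 \<le> t0" "K \<le> f t0" "t0 \<le> t"
  shows "K \<le> f t"
proof -
  obtain \<phi> where vel: "\<And>u. 0 \<le> u \<Longrightarrow> \<phi> u \<in> (\<lambda>s. -2 * s * sqrt (f u)) ` sgn_set (g u)"
    and int: "\<And>t. 0 \<le> t \<Longrightarrow> (\<phi> has_integral (f t - f 0)) {0..t}"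
    using assms(1) unfolding sign_flow_def by blast
  have int': "((\<lambda>u. - \<phi> u) has_integral (- f t - - f 0)) {0..t}" if "0 \<le> t" for t
    using has_integral_neg[OF int[OF that]] by simp
  have "- f t \<le> - K"
  proof (rule integral_curve_stays_below[where f="\<lambda>u. - f u", OF int' _ assms(4)])
    fix u :: real assume "0 \<le> u" "- K < - f u"
    then show "- \<phi> u \<le> 0"
      using sign_velocity_nonneg[OF nonneg pull vel, of u] by simp
  qed (use assms(5,6) in simp_all)
  then show ?thesis
    by simp
qed

lemma sign_flow_hitting_time:
  assumes "sign_flow f g" and "{s. 0 \<le> s \<and> rho \<le> f s} \<noteq> {}"
  shows "0 \<le> T2' f rho" and "rho \<le> f (T2' f rho)"
proof -
  define H where "H = {s. 0 \<le> s \<and> rho \<le> f s}"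
  have "H = {0..} \<inter> f -` {rho..}"
    unfolding H_def by auto
  then have "closed H"
    using continuous_closed_preimage[OF sign_flow_continuous_on[OF assms(1)]] by simp
  moreover have "bdd_below H"
    unfolding H_def by (rule bdd_belowI[of _ 0]) simp
  moreover have "H \<noteq> {}"
    using assms(2) unfolding H_def .
  ultimately have "Inf H \<in> H"
    by (intro closed_contains_Inf)
  then show "0 \<le> T2' f rho" and "rho \<le> f (T2' f rho)"
    unfolding T2'_def H_def by simp_all
qed

lemma is_traj_sign_flows:
  assumes "is_traj d lam mu a b c"
  shows "sign_flow a (\<lambda>t. g_star d lam (a t) (b t) (c t))"
    and "sign_flow b (\<lambda>t. g_v d lam (a t) (b t) (c t))"
    and "sign_flow c (\<lambda>t. g_perp d lam (a t) (b t) (c t))"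
proof -
  have init: "a 0 = mu" "b 0 = mu" "c 0 = mu"
    using assms unfolding is_traj_def by simp_all
  obtain \<alpha> \<beta> \<gamma> where
    "\<forall>t\<ge>0. \<alpha> t \<in> (\<lambda>s. -2 * s * sqrt (a t)) ` sgn_set (g_star d lam (a t) (b t) (c t))"
    "\<forall>t\<ge>0. \<beta> t \<in> (\<lambda>s. -2 * s * sqrt (b t)) ` sgn_set (g_v d lam (a t) (b t) (c t))"
    "\<forall>t\<ge>0. \<gamma> t \<in> (\<lambda>s. -2 * s * sqrt (c t)) ` sgn_set (g_perp d lam (a t) (b t) (c t))"
    "\<forall>t\<ge>0. (\<alpha> has_integral (a t - mu)) {0..t}"
    "\<forall>t\<ge>0. (\<beta> has_integral (b t - mu)) {0..t}"
    "\<forall>t\<ge>0. (\<gamma> has_integral (c t - mu)) {0..t}"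
    using assms unfolding is_traj_def by (elim conjE exE)
  then show "sign_flow a (\<lambda>t. g_star d lam (a t) (b t) (c t))"
    and "sign_flow b (\<lambda>t. g_v d lam (a t) (b t) (c t))"
    and "sign_flow c (\<lambda>t. g_perp d lam (a t) (b t) (c t))"
    unfolding sign_flow_def init by blast+
qed

lemma g_perp_pos:
  assumes "0 \<le> x" "0 \<le> (1 + lam) * y" "1 < real d * z"
  shows "0 < g_perp d lam x y z"
proof -
  have "g_perp d lam x y z = 4 * (x + (1 + lam) * y + real d * z - 1)"
    by (simp add: g_perp_def r_fn_def algebra_simps)
  with assms show ?thesis
    by simp
qed

lemma g_v_pos:
  assumes "0 < lam" "0 \<le> x" "0 \<le> (real d - 2) * z" "1 < 3 * (1 + lam) * y"
  shows "0 < g_v d lam x y z"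
proof -
  have "g_v d lam x y z = 4 * (1 + lam) * (x + 3 * (1 + lam) * y + (real d - 2) * z - 1)"
    by (simp add: g_v_def r_fn_def algebra_simps)
  with assms show ?thesis
    by (simp add: zero_less_mult_iff)
qed

lemma g_star_neg:
  assumes "x < 5/9" "(1 + lam) * y \<le> 1/3" "(real d - 2) * z \<le> 1"
  shows "g_star d lam x y z < 0"
proof -
  have "g_star d lam x y z = 4 * (3 * x + (1 + lam) * y + (real d - 2) * z - 3)"
    by (simp add: g_star_def r_fn_def algebra_simps)
  with assms show ?thesis
    by simp
qed

lemma is_traj_nonneg:
  assumes "is_traj d lam mu a b c" "0 \<le> t"
  shows "0 \<le> a t" and "0 \<le> b t" and "0 \<le> c t"
  using assms unfolding is_traj_def by auto

context
  fixes d :: nat and lam mu :: real and a b c :: "real \<Rightarrow> real"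
  assumes traj: "is_traj d lam mu a b c" and d: "2 \<le> d" and lam: "0 < lam"
begin

lemma traj_perp_le:
  assumes "mu \<le> 1 / real d" and "0 \<le> t"
  shows "c t \<le> 1 / real d"
proof (rule sign_flow_stays_below[OF is_traj_sign_flows(3)[OF traj] _ _ order_refl _ \<open>0 \<le> t\<close>])
  show "c 0 \<le> 1 / real d"
    using traj assms(1) by (simp add: is_traj_def)
  fix u :: real assume u: "0 \<le> u"
  then show "0 \<le> c u"
    by (rule is_traj_nonneg[OF traj])
  assume "1 / real d < c u"
  then have "1 < real d * c u"
    using d by (simp add: field_simps)
  then show "0 < g_perp d lam (a u) (b u) (c u)"
    using is_traj_nonneg[OF traj u] lam by (intro g_perp_pos) auto
qed

lemma traj_v_le:
  assumes "mu \<le> 1 / (3 * (1 + lam))" and "0 \<le> t"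
  shows "b t \<le> 1 / (3 * (1 + lam))"
proof (rule sign_flow_stays_below[OF is_traj_sign_flows(2)[OF traj] _ _ order_refl _ \<open>0 \<le> t\<close>])
  show "b 0 \<le> 1 / (3 * (1 + lam))"
    using traj assms(1) by (simp add: is_traj_def)
  fix u :: real assume u: "0 \<le> u"
  then show "0 \<le> b u"
    by (rule is_traj_nonneg[OF traj])
  assume "1 / (3 * (1 + lam)) < b u"
  then have "1 < 3 * (1 + lam) * b u"
    using lam by (simp add: field_simps)
  then show "0 < g_v d lam (a u) (b u) (c u)"
    using is_traj_nonneg[OF traj u] d lam by (intro g_v_pos) auto
qed

lemma traj_star_ge:
  assumes "mu \<le> 1 / real d" "mu \<le> 1 / (3 * (1 + lam))" and "rho \<le> 5/9"
    and "0 \<le> t0" "rho \<le> a t0" "t0 \<le> t"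
  shows "rho \<le> a t"
proof (rule sign_flow_stays_above[OF is_traj_sign_flows(1)[OF traj] _ _ assms(4-6)])
  fix u :: real assume u: "0 \<le> u"
  then show "0 \<le> a u"
    by (rule is_traj_nonneg[OF traj])
  assume "a u < rho"
  have "(1 + lam) * b u \<le> 1/3"
    using traj_v_le[OF assms(2) u] lam by (simp add: field_simps)
  moreover have "(real d - 2) * c u \<le> 1"
  proof -
    have "(real d - 2) * c u \<le> real d * c u"
      using is_traj_nonneg[OF traj u] by (simp add: mult_right_mono)
    also have "\<dots> \<le> 1"
      using traj_perp_le[OF assms(1) u] d by (simp add: field_simps)
    finally show ?thesis .
  qed
  ultimately show "g_star d lam (a u) (b u) (c u) < 0"
    using \<open>a u < rho\<close> assms(3) by (intro g_star_neg) auto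
qed

end

lemma perp_energy_le:
  fixes D c :: real
  assumes "2 < D" "0 \<le> c" "c \<le> 1 / D"
  shows "(D - 2) * c\<^sup>2 \<le> 1 / (D - 2)"
proof -
  have "(D - 2) * c \<le> 1"
    using assms by (simp add: field_simps)
  moreover have "c \<le> 1 / (D - 2)"
    using assms(1,3) order_trans[OF _ divide_left_mono[of "D - 2" D 1]] by simp
  ultimately have "((D - 2) * c) * c \<le> 1 * (1 / (D - 2))"
    using assms by (intro mult_mono) auto
  then show ?thesis
    by (simp add: power2_eq_square mult.assoc)
qed

text \<open>With \<open>s = sqrt (x\<^sup>2 + q)\<close> one has \<open>1 - x / s = q / (s * (s + x))\<close> and \<open>s \<ge> x\<close>.\<close>
lemma one_minus_div_sqrt_le:
  fixes x q :: real
  assumes "0 < x" "0 \<le> q"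
  shows "1 - x / sqrt (x\<^sup>2 + q) \<le> q / (2 * x\<^sup>2)"
proof -
  define s where "s = sqrt (x\<^sup>2 + q)"
  have "x \<le> s"
    unfolding s_def using assms by (simp add: real_le_rsqrt)
  have "s\<^sup>2 = x\<^sup>2 + q"
    unfolding s_def using assms by simp
  then have q: "q = (s - x) * (s + x)"
    by (simp add: algebra_simps power2_eq_square)
  have "0 < s" "0 < s + x"
    using \<open>x \<le> s\<close> assms(1) by auto
  then have "1 - x / s = (s - x) / s"
    by (simp add: field_simps)
  also have "\<dots> = (s - x) * (s + x) / (s * (s + x))"
    using \<open>0 < s + x\<close> by simp
  also have "\<dots> = q / (s * (s + x))"
    by (simp only: q)
  also have "\<dots> \<le> q / (2 * x\<^sup>2)"
  proof (rule divide_left_mono)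
    have "x * x \<le> s * s" "x * x \<le> s * x"
      using \<open>x \<le> s\<close> assms(1) by (auto intro: mult_mono mult_right_mono)
    then show "2 * x\<^sup>2 \<le> s * (s + x)"
      by (simp add: power2_eq_square distrib_left)
  qed (use assms \<open>0 < s\<close> \<open>0 < s + x\<close> in auto)
  finally show ?thesis
    by (simp add: s_def)
qed

lemma one_minus_align_le:
  assumes "2 \<le> d" "0 < rho" "rho \<le> x"
  shows "1 - align d x y z \<le> (y\<^sup>2 + (real d - 2) * z\<^sup>2) / (2 * rho\<^sup>2)"
proof -
  define q where "q = y\<^sup>2 + (real d - 2) * z\<^sup>2"
  have "0 \<le> q"
    unfolding q_def using assms(1) by simp
  have "1 - align d x y z \<le> q / (2 * x\<^sup>2)"
    unfolding align_def q_def add.assoc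
    using one_minus_div_sqrt_le assms \<open>0 \<le> q\<close> q_def by auto
  also have "\<dots> \<le> q / (2 * rho\<^sup>2)"
    using assms \<open>0 \<le> q\<close> by (intro divide_left_mono mult_left_mono power_mono) auto
  finally show ?thesis
    by (simp add: q_def)
qed

lemma traj_bounds_after_hit:
  assumes "3 \<le> d" "0 < lam" "mu \<le> 1 / real d" "mu \<le> 1 / (3 * (1 + lam))"
    and traj: "is_traj d lam mu a b c"
    and "0 < rho" "rho \<le> 5/9"
    and hit: "{s. 0 \<le> s \<and> rho \<le> a s} \<noteq> {}" and "T2' a rho \<le> t"
  shows "rho \<le> a t \<and> b t \<le> 1 / (3 * (1 + lam)) \<and>
           (real d - 2) * (c t)\<^sup>2 \<le> 1 / (real d - 2) \<and>
           1 - align d (a t) (b t) (c t)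
             \<le> 1 / (2 * rho\<^sup>2) * (1 / (9 * (1 + lam)\<^sup>2) + 1 / (real d - 2))"
proof -
  note hit_time = sign_flow_hitting_time[OF is_traj_sign_flows(1)[OF traj] hit]
  have "2 \<le> d" "0 \<le> t"
    using assms(1,9) hit_time(1) by auto
  note nonneg = is_traj_nonneg[OF traj \<open>0 \<le> t\<close>]
  have a: "rho \<le> a t"
    using traj_star_ge[OF traj \<open>2 \<le> d\<close> assms(2-4,7) hit_time assms(9)] .
  have b: "b t \<le> 1 / (3 * (1 + lam))"
    using traj_v_le[OF traj \<open>2 \<le> d\<close> assms(2,4) \<open>0 \<le> t\<close>] .
  have c: "(real d - 2) * (c t)\<^sup>2 \<le> 1 / (real d - 2)"
    using traj_perp_le[OF traj \<open>2 \<le> d\<close> assms(2,3) \<open>0 \<le> t\<close>] nonneg assms(1)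
    by (intro perp_energy_le) auto
  have "(b t)\<^sup>2 \<le> (1 / (3 * (1 + lam)))\<^sup>2"
    using b nonneg by (intro power_mono) auto
  then have "(b t)\<^sup>2 \<le> 1 / (9 * (1 + lam)\<^sup>2)"
    by (simp only: power_divide power_mult_distrib) simp
  have "1 - align d (a t) (b t) (c t) \<le> ((b t)\<^sup>2 + (real d - 2) * (c t)\<^sup>2) / (2 * rho\<^sup>2)"
    using one_minus_align_le[OF \<open>2 \<le> d\<close> assms(6) a] .
  also have "\<dots> \<le> (1 / (9 * (1 + lam)\<^sup>2) + 1 / (real d - 2)) / (2 * rho\<^sup>2)"
    using \<open>(b t)\<^sup>2 \<le> 1 / (9 * (1 + lam)\<^sup>2)\<close> c by (intro divide_right_mono) auto
  finally show ?thesis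
    using a b c by simp
qed

lemma initial_value_le:
  fixes d :: nat and lam rho0 :: real
  assumes "3 \<le> d" "0 < lam" "0 \<le> rho0" "rho0 \<le> 1/3"
  shows "rho0 / (real d + lam) \<le> 1 / real d"
    and "rho0 / (real d + lam) \<le> 1 / (3 * (1 + lam))"
proof -
  show "rho0 / (real d + lam) \<le> 1 / real d"
    using assms by (intro frac_le) auto
  have "rho0 / (real d + lam) \<le> (1/3) / (1 + lam)"
    using assms by (intro frac_le) auto
  then show "rho0 / (real d + lam) \<le> 1 / (3 * (1 + lam))"
    by simp
qed

corollary traj_bounds_small_init:
  assumes "3 \<le> d" "0 < lam" "0 < rho0" "rho0 < 1/3"
    and "is_traj d lam (rho0 / (real d + lam)) a b c"
    and "0 < rho" "rho \<le> 5/9"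
    and "{s. 0 \<le> s \<and> rho \<le> a s} \<noteq> {}" "T2' a rho \<le> t"
  shows "rho \<le> a t \<and> b t \<le> 1 / (3 * (1 + lam)) \<and>
           (real d - 2) * (c t)\<^sup>2 \<le> 1 / (real d - 2) \<and>
           1 - align d (a t) (b t) (c t)
             \<le> 1 / (2 * rho\<^sup>2) * (1 / (9 * (1 + lam)\<^sup>2) + 1 / (real d - 2))"
proof -
  have "0 \<le> rho0" "rho0 \<le> 1/3"
    using assms(3,4) by auto
  from initial_value_le[OF assms(1,2) this] show ?thesis
    by (rule traj_bounds_after_hit[OF assms(1,2) _ _ assms(5-9)])
qed

lemma misalignment_bound_tendsto_0:
  assumes "filterlim D at_top sequentially" "filterlim L at_top sequentially"
  shows "((\<lambda>n. 1 / (2 * rho\<^sup>2) * (1 / (9 * (1 + L n)\<^sup>2) + 1 / (real (D n) - 2)))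
           \<longlongrightarrow> 0) sequentially"
proof -
  have "filterlim (\<lambda>n. 9 * (1 + L n)\<^sup>2) at_top sequentially"
    using filterlim_tendsto_add_at_top[OF tendsto_const assms(2)]
    by (intro filterlim_tendsto_pos_mult_at_top[OF tendsto_const] filterlim_pow_at_top) auto
  moreover have "filterlim (\<lambda>n. real (D n) - 2) at_top sequentially"
    using filterlim_tendsto_add_at_top[OF tendsto_const[of "-2"]
        filterlim_compose[OF filterlim_real_sequentially assms(1)]]
    by simp
  ultimately show ?thesis
    by (intro tendsto_mult_right_zero tendsto_add_zero tendsto_divide_0[OF tendsto_const]
        filterlim_at_top_imp_at_infinity)
qed

theorem propositionC4:
  shows
  "(\<forall>rho::real. 0 < rho \<and> rho < 1/12 \<longrightarrow>
      (\<exists>eps>0. \<forall>(d::nat) (lam::real) (rho0::real) a b c (t::real).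
         3 \<le> d \<longrightarrow> 0 < lam \<longrightarrow> 0 < rho0 \<longrightarrow> rho0 < eps \<longrightarrow>
         is_traj d lam (rho0 / (real d + lam)) a b c \<longrightarrow>
         {s. 0 \<le> s \<and> rho \<le> a s} \<noteq> {} \<longrightarrow> T2' a rho \<le> t \<longrightarrow>
           rho \<le> a t \<and> b t \<le> 1 / (3 * (1 + lam)) \<and>
           (real d - 2) * (c t)\<^sup>2 \<le> 1 / (real d - 2) \<and>
           1 - align d (a t) (b t) (c t)
             \<le> 1 / (2 * rho\<^sup>2) * (1 / (9 * (1 + lam)\<^sup>2) + 1 / (real d - 2))))
   \<and>
   (\<forall>rho::real. 0 < rho \<and> rho < 1/12 \<longrightarrow>
      (\<forall>(D::nat \<Rightarrow> nat) (L::nat \<Rightarrow> real) (R0::nat \<Rightarrow> real)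
         (A::nat \<Rightarrow> real \<Rightarrow> real) (B::nat \<Rightarrow> real \<Rightarrow> real) (C::nat \<Rightarrow> real \<Rightarrow> real).
         filterlim D at_top sequentially \<longrightarrow> filterlim L at_top sequentially \<longrightarrow>
         R0 \<longlonglongrightarrow> 0 \<longrightarrow>
         (\<forall>n. 3 \<le> D n \<and> 0 < L n \<and> 0 < R0 n \<and>
              is_traj (D n) (L n) (R0 n / (real (D n) + L n)) (A n) (B n) (C n)) \<longrightarrow>
         (\<forall>e>0. \<forall>\<^sub>F n in sequentially. \<forall>t.
              {s. 0 \<le> s \<and> rho \<le> A n s} \<noteq> {} \<longrightarrow> T2' (A n) rho \<le> t \<longrightarrow>
              1 - align (D n) (A n t) (B n t) (C n t) \<le> e)))"
  apply (intro conjI allI impI)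
  subgoal premises rho for rho
  proof -
    have "0 < rho" "rho \<le> 5/9"
      using rho by auto
    then show ?thesis
      using traj_bounds_small_init by (intro exI[of _ "1/3"] conjI) (simp, blast)
  qed
  subgoal premises prems for rho D L R0 A B C e
  proof -
    have rho: "0 < rho" "rho \<le> 5/9"
      using prems(1) by auto
    have "\<forall>\<^sub>F n in sequentially. R0 n < 1/3"
      using prems(4) by (rule order_tendstoD) simp
    moreover have "\<forall>\<^sub>F n in sequentially.
        1 / (2 * rho\<^sup>2) * (1 / (9 * (1 + L n)\<^sup>2) + 1 / (real (D n) - 2)) < e"
      using misalignment_bound_tendsto_0[OF prems(2,3)] prems(6) by (rule order_tendstoD)
    ultimately show ?thesis
    proof eventually_elim
      case (elim n)
      have traj: "3 \<le> D n" "0 < L n" "0 < R0 n" "R0 n < 1/3"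
        "is_traj (D n) (L n) (R0 n / (real (D n) + L n)) (A n) (B n) (C n)"
        using prems(5) elim(1) by auto
      show ?case
      proof (intro allI impI)
        fix t assume "{s. 0 \<le> s \<and> rho \<le> A n s} \<noteq> {}" "T2' (A n) rho \<le> t"
        then have "1 - align (D n) (A n t) (B n t) (C n t)
            \<le> 1 / (2 * rho\<^sup>2) * (1 / (9 * (1 + L n)\<^sup>2) + 1 / (real (D n) - 2))"
          using traj_bounds_small_init[OF traj rho] by blast
        with elim(2) show "1 - align (D n) (A n t) (B n t) (C n t) \<le> e"
          by linarith
      qed
    qed
  qed
  done

end
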